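(* Let $\rho(t)$ solve the Lindblad equation $\frac{d}{dt}\rho=[-iH(t),\rho]+\mathcal{L}_D(\rho)$ and suppose $\rho(t)=\sum_{j=1}^n\lambda_j(t)\pi_j(t)$ where $\Lambda(t)=(\lambda_1(t),\dots,\lambda_n(t))$ is differentiable and $\pi(t)=(\pi_1(t),\dots,\pi_n(t))$ is a differentiable complete flag. Then $$\frac{d}{dt}\Lambda(t)=\Omega^{\pi(t)}\Lambda(t).$$ This holds also at sharp eigenvalue crossings.
   Context: Dissipator: $\mathcal{L}_D(\rho)=\sum_{k=1}^N\big(L_k\rho L_k^\dagger-\tfrac12\{L_k^\dagger L_k,\rho\}\big)$ for fixed $n\times n$ complex matrices $L_1,\dots,L_N$, $H(t)$ Hermitian. A complete flag $\pi=(\pi_1,\dots,\pi_n)$ is an $n$-tuple of rank-one orthogonal projectors on $\mathbb{C}^n$ with $\pi_i\pi_j=\delta_{ij}\pi_i$ and $\sum_j\pi_j=I$. For a complete flag define $w^\pi_{ij}=\sum_{k=1}^N\mathrm{Tr}(\pi_iL_k\pi_jL_k^\dagger)$ and the $n\times n$ matrix $\Omega^\pi$ by $\Omega^\pi_{ij}=w^\pi_{ij}$ for $i\neq j$ and $\Omega^\pi_{jj}=-\sum_{l\neq j}w^\pi_{lj}$. A sharp eigenvalue crossing is an isolated time where some $\lambda_j$ coincide and all crossing eigenvalues have pairwise different derivatives. *)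

theory Defs
  imports "HOL-Analysis.Analysis"
begin

type_synonym 'n cmat = "complex^'n^'n"

definition adj :: "'n::finite cmat \<Rightarrow> 'n cmat" where
  "adj A = (\<chi> i j. cnj (A $ j $ i))"

definition cscale :: "complex \<Rightarrow> 'n::finite cmat \<Rightarrow> 'n cmat" where
  "cscale c A = (\<chi> i j. c * A $ i $ j)"

definition hermitian :: "'n::finite cmat \<Rightarrow> bool" where
  "hermitian A \<longleftrightarrow> adj A = A"

definition dissipator :: "nat \<Rightarrow> (nat \<Rightarrow> 'n::finite cmat) \<Rightarrow> 'n cmat \<Rightarrow> 'n cmat" where
  "dissipator N L \<rho> = (\<Sum>k\<in>{1..N}. L k ** \<rho> ** adj (L k)
       - cscale (1/2) (adj (L k) ** L k ** \<rho> + \<rho> ** (adj (L k) ** L k)))"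

definition rank_one_proj :: "'n::finite cmat \<Rightarrow> bool" where
  "rank_one_proj P \<longleftrightarrow> P ** P = P \<and> adj P = P \<and> rank P = 1"

definition complete_flag :: "('n::finite \<Rightarrow> 'n cmat) \<Rightarrow> bool" where
  "complete_flag \<pi> \<longleftrightarrow> (\<forall>j. rank_one_proj (\<pi> j))
     \<and> (\<forall>i j. \<pi> i ** \<pi> j = (if i = j then \<pi> i else 0))
     \<and> (\<Sum>j\<in>UNIV. \<pi> j) = mat 1"

definition wrate :: "nat \<Rightarrow> (nat \<Rightarrow> 'n::finite cmat) \<Rightarrow> ('n \<Rightarrow> 'n cmat) \<Rightarrow> 'n \<Rightarrow> 'n \<Rightarrow> complex" where
  "wrate N L \<pi> i j = (\<Sum>k\<in>{1..N}. trace (\<pi> i ** L k ** \<pi> j ** adj (L k)))"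

definition Omega :: "nat \<Rightarrow> (nat \<Rightarrow> 'n::finite cmat) \<Rightarrow> ('n \<Rightarrow> 'n cmat) \<Rightarrow> 'n cmat" where
  "Omega N L \<pi> = (\<chi> i j. if i \<noteq> j then wrate N L \<pi> i j
                           else - (\<Sum>l\<in>UNIV - {j}. wrate N L \<pi> l j))"

definition cvec :: "real^'n \<Rightarrow> complex^'n" where
  "cvec x = (\<chi> j. complex_of_real (x $ j))"

end

theory Submission
  imports Defs
begin

(* Pair the Lindblad equation with each projector pi_i of the flag and take traces.
   On the left, differentiating rho = sum_j lambda_j pi_j gives lambda_i' plus terms
   tr(pi_i pi_j'), which vanish: differentiating pi_i pi_j = delta_ij pi_i and sandwiching
   by pi_i shows pi_i pi_j' pi_i = 0.  On the right, pi_i commutes with rho, so the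
   Hamiltonian part contributes nothing, and the
   dissipator splits into the gain sum_j w_ij lambda_j and the loss lambda_i sum_m w_mi,
   i.e. the i-th row of Omega Lambda. *)

lemma matrix_add_rdistrib: "((A::'a::semiring_1^'n^'m) + B) ** C = A ** C + B ** C"
  by (vector matrix_matrix_mult_def sum.distrib[symmetric] field_simps)

lemma matrix_diff_ldistrib: "(A::'a::ring_1^'n^'m) ** (B - C) = A ** B - A ** C"
  by (vector matrix_matrix_mult_def sum_subtractf[symmetric] field_simps)

lemma matrix_sum_ldistrib: "(A::'a::semiring_1^'n^'m) ** sum f S = (\<Sum>x\<in>S. A ** f x)"
  by (induction S rule: infinite_finite_induct) (auto simp: matrix_add_ldistrib)

lemma matrix_sum_rdistrib: "sum f S ** (A::'a::semiring_1^'p^'n) = (\<Sum>x\<in>S. f x ** A)"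
  by (induction S rule: infinite_finite_induct) (auto simp: matrix_add_rdistrib)

lemma trace_sum: "trace (sum f S :: 'a::comm_semiring_1^'n^'n) = (\<Sum>x\<in>S. trace (f x))"
  by (induction S rule: infinite_finite_induct) (auto simp: trace_add trace_0[simplified])

lemma trace_scaleR:
  "trace (c *\<^sub>R (A::'a::{real_algebra_1,comm_semiring_1}^'n^'n)) = of_real c * trace A"
  unfolding trace_def by (simp add: sum_distrib_left scaleR_conv_of_real[symmetric])

lemma trace_cscale: "trace (cscale c A) = c * trace A"
  by (simp add: trace_def sum_distrib_left cscale_def)

lemma matrix_mult_cscale: "A ** cscale c B = cscale c (A ** B)"
  by (simp add: matrix_matrix_mult_def cscale_def vec_eq_iff sum_distrib_left mult_ac)

lemma bounded_bilinear_matrix_mult: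
  "bounded_bilinear (\<lambda>(A::'a::{real_algebra_1,euclidean_space}^'n^'m) (B::'a^'p^'n). A ** B)"
proof -
  have "bilinear (\<lambda>(A::'a^'n^'m) (B::'a^'p^'n). A ** B)"
    unfolding bilinear_def
    by (auto intro!: linearI simp: matrix_add_ldistrib matrix_add_rdistrib
        scalar_matrix_assoc matrix_scalar_ac)
  then show ?thesis by (simp add: bilinear_conv_bounded_bilinear)
qed

lemma trace_idempotent_rank_one:
  fixes P :: "'a::field^'n^'n"
  assumes idem: "P ** P = P" and rank: "rank P = 1"
  shows "trace P = 1"
proof -
  obtain B where B: "B \<subseteq> rows P" "vec.independent B" "rows P \<subseteq> vec.span B"
      "card B = vec.dim (rows P)"
    using vec.basis_exists by blast
  then have "card B = 1" using rank by (simp add: row_rank_def_gen)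
  then obtain r where "B = {r}" by (auto simp: card_1_singleton_iff)
  with B have "r \<noteq> 0" and "r \<in> rows P" and rows_span: "rows P \<subseteq> vec.span {r}"
    using vec.dependent_zero by auto
  then obtain a0 where ra0: "r = P $ a0"
    by (auto simp: rows_def row_def vec_eq_iff)
  have "\<exists>c. P $ a = c *s r" for a
  proof -
    have "P $ a \<in> rows P" by (auto simp: rows_def row_def vec_eq_iff intro!: exI[of _ a])
    then show ?thesis using rows_span by (auto simp: vec.span_singleton)
  qed
  then obtain c where row_eq: "\<And>a. P $ a = c a *s r" by metis
  then have P_entry: "\<And>a b. P $ a $ b = c a * r $ b" by simp
  obtain d where d: "r $ d \<noteq> 0" using \<open>r \<noteq> 0\<close> by (auto simp: vec_eq_iff)
  have "c a0 \<noteq> 0" by (metis \<open>r \<noteq> 0\<close> ra0 row_eq vector_smult_lzero)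
  define s where "s = (\<Sum>b\<in>UNIV. r $ b * c b)"
  have "c a0 * r $ d * s = c a0 * r $ d"
    using arg_cong[OF idem, of "\<lambda>M. M $ a0 $ d"]
    by (simp add: matrix_matrix_mult_def P_entry s_def sum_distrib_left mult_ac)
  then have "s = 1" using \<open>c a0 \<noteq> 0\<close> d by simp
  then show ?thesis by (simp add: trace_def P_entry s_def mult.commute)
qed

lemma orthogonal_projections_derivative:
  fixes \<pi> :: "real \<Rightarrow> 'k \<Rightarrow> 'a::{real_algebra_1,euclidean_space}^'n^'n"
  assumes "open I" "t \<in> I"
    and orth: "\<And>s. s \<in> I \<Longrightarrow> \<pi> s i ** \<pi> s j = (if i = j then \<pi> s i else 0)"
    and deriv: "\<And>k. ((\<lambda>s. \<pi> s k) has_vector_derivative \<pi>' k) (at t)"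
  shows "\<pi> t i ** \<pi>' j + \<pi>' i ** \<pi> t j = (if i = j then \<pi>' i else 0)"
proof (rule vector_derivative_unique_at)
  show "((\<lambda>s. \<pi> s i ** \<pi> s j) has_vector_derivative \<pi> t i ** \<pi>' j + \<pi>' i ** \<pi> t j) (at t)"
    using bounded_bilinear.has_vector_derivative[OF bounded_bilinear_matrix_mult deriv deriv]
    by simp
  show "((\<lambda>s. \<pi> s i ** \<pi> s j) has_vector_derivative (if i = j then \<pi>' i else 0)) (at t)"
  proof (rule has_vector_derivative_transform_within_open[OF _ assms(1,2)])
    show "((\<lambda>s. if i = j then \<pi> s i else 0) has_vector_derivative (if i = j then \<pi>' i else 0)) (at t)"
      using deriv by simp
  qed (simp add: orth)
qed

(* Sandwiching the product rule between two copies of A kills everything but A X A,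
   whose trace is that of A X. *)
lemma trace_proj_mult_eq_0:
  fixes A B X D :: "'a::comm_ring_1^'n^'n"
  assumes idem: "A ** A = A" and orth: "B ** A = (if j = i then A else 0)"
    and product_rule: "A ** X + D ** B = (if i = j then D else 0)"
  shows "trace (A ** X) = 0"
proof -
  have "A ** (A ** X + D ** B) ** A = A ** X ** A + A ** D ** (B ** A)"
    by (simp add: matrix_add_ldistrib matrix_add_rdistrib idem matrix_mul_assoc)
  also have "\<dots> = A ** X ** A + (if i = j then A ** D ** A else 0)"
    using orth by auto
  finally have "A ** X ** A = 0" using product_rule by (cases "i = j") auto
  have "trace (A ** X) = trace (A ** (A ** X))" by (simp add: matrix_mul_assoc idem)
  also have "\<dots> = trace (A ** X ** A)" by (rule trace_mul_sym)
  finally show ?thesis using \<open>A ** X ** A = 0\<close> by (simp add: trace_0[simplified])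
qed

lemma orthogonal_family_mult_sum:
  fixes P :: "'k::finite \<Rightarrow> 'a::real_algebra_1^'n^'n"
  assumes orth: "\<And>i j. P i ** P j = (if i = j then P i else 0)"
  shows "P i ** (\<Sum>j\<in>UNIV. l j *\<^sub>R P j) = l i *\<^sub>R P i"
    and "(\<Sum>j\<in>UNIV. l j *\<^sub>R P j) ** P i = l i *\<^sub>R P i"
  by (simp_all add: matrix_sum_ldistrib matrix_sum_rdistrib matrix_scalar_ac
      scalar_matrix_assoc[symmetric] orth if_distrib cong: if_cong)

lemma trace_orthogonal_family_mult_sum:
  fixes P :: "'k::finite \<Rightarrow> 'a::{real_algebra_1,comm_ring_1}^'n^'n"
  assumes orth: "\<And>i j. P i ** P j = (if i = j then P i else 0)"
  shows "trace (P i ** X ** (\<Sum>j\<in>UNIV. l j *\<^sub>R P j)) = of_real (l i) * trace (P i ** X)"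
    and "trace (P i ** ((\<Sum>j\<in>UNIV. l j *\<^sub>R P j) ** X)) = of_real (l i) * trace (P i ** X)"
proof -
  have "trace (P i ** X ** (\<Sum>j\<in>UNIV. l j *\<^sub>R P j))
      = trace ((\<Sum>j\<in>UNIV. l j *\<^sub>R P j) ** P i ** X)"
    by (simp add: trace_mul_sym[of "P i ** X"] matrix_mul_assoc)
  then show "trace (P i ** X ** (\<Sum>j\<in>UNIV. l j *\<^sub>R P j)) = of_real (l i) * trace (P i ** X)"
    by (simp add: orthogonal_family_mult_sum[OF orth] scalar_matrix_assoc[symmetric] trace_scaleR)
  show "trace (P i ** ((\<Sum>j\<in>UNIV. l j *\<^sub>R P j) ** X)) = of_real (l i) * trace (P i ** X)"
    by (simp add: matrix_mul_assoc orthogonal_family_mult_sum[OF orth]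
        scalar_matrix_assoc[symmetric] trace_scaleR)
qed

lemma complete_flag_orthogonal:
  "complete_flag P \<Longrightarrow> P i ** P j = (if i = j then P i else 0)"
  by (simp add: complete_flag_def)

lemma complete_flag_sum: "complete_flag P \<Longrightarrow> (\<Sum>j\<in>UNIV. P j) = mat 1"
  by (simp add: complete_flag_def)

lemma complete_flag_trace: "complete_flag P \<Longrightarrow> trace (P i) = 1"
  using trace_idempotent_rank_one by (auto simp: complete_flag_def rank_one_proj_def)

lemma trace_flag_mult_commutator:
  assumes "complete_flag P"
  shows "trace (P i ** (H ** (\<Sum>j\<in>UNIV. l j *\<^sub>R P j) - (\<Sum>j\<in>UNIV. l j *\<^sub>R P j) ** H)) = 0"
  using trace_orthogonal_family_mult_sum[OF complete_flag_orthogonal[OF assms]]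
  by (simp add: matrix_diff_ldistrib trace_sub matrix_mul_assoc)

(* Inserting the resolution of the identity into the anticommutator term turns it into
   the total outflow from level i. *)
lemma trace_flag_mult_dissipator:
  fixes l :: "'n::finite \<Rightarrow> real"
  assumes flag: "complete_flag P"
  defines "\<rho> \<equiv> \<Sum>j\<in>UNIV. l j *\<^sub>R P j"
  shows "trace (P i ** dissipator N L \<rho>) =
    (\<Sum>j\<in>UNIV. of_real (l j) * wrate N L P i j) - of_real (l i) * (\<Sum>m\<in>UNIV. wrate N L P m i)"
proof -
  note sandwich = trace_orthogonal_family_mult_sum[OF complete_flag_orthogonal[OF flag],
      where l = l, folded \<rho>_def]
  have anticommutator:
    "trace (P i ** (adj (L k) ** L k ** \<rho>)) = of_real (l i) * trace (P i ** (adj (L k) ** L k))"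
    "trace (P i ** (\<rho> ** (adj (L k) ** L k))) = of_real (l i) * trace (P i ** (adj (L k) ** L k))"
    for k
    using sandwich[of i "adj (L k) ** L k"] by (simp_all add: matrix_mul_assoc)
  have gain: "trace (P i ** L k ** \<rho> ** adj (L k)) =
      (\<Sum>j\<in>UNIV. of_real (l j) * trace (P i ** L k ** P j ** adj (L k)))" for k
    by (simp add: \<rho>_def matrix_sum_ldistrib matrix_sum_rdistrib scalar_matrix_assoc[symmetric]
        matrix_scalar_ac trace_sum trace_scaleR matrix_mul_assoc)
  have outflow: "trace (P i ** (adj (L k) ** L k)) =
      (\<Sum>m\<in>UNIV. trace (P m ** L k ** P i ** adj (L k)))" for k
  proof -
    have "trace (P i ** (adj (L k) ** L k)) = trace (L k ** (P i ** adj (L k)))"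
      by (simp add: trace_mul_sym[of _ "L k"] matrix_mul_assoc)
    also have "\<dots> = trace ((\<Sum>m\<in>UNIV. P m) ** (L k ** (P i ** adj (L k))))"
      by (simp add: complete_flag_sum[OF flag])
    finally show ?thesis by (simp add: matrix_sum_rdistrib trace_sum matrix_mul_assoc)
  qed
  have "trace (P i ** dissipator N L \<rho>) = (\<Sum>k\<in>{1..N}. trace (P i ** L k ** \<rho> ** adj (L k))
      - 1/2 * (trace (P i ** (adj (L k) ** L k ** \<rho>)) + trace (P i ** (\<rho> ** (adj (L k) ** L k)))))"
    by (simp add: dissipator_def matrix_sum_ldistrib trace_sum matrix_diff_ldistrib trace_sub
        matrix_mult_cscale trace_cscale matrix_add_ldistrib trace_add matrix_mul_assoc)
  also have "\<dots> = (\<Sum>k\<in>{1..N}. (\<Sum>j\<in>UNIV. of_real (l j) * trace (P i ** L k ** P j ** adj (L k)))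
      - of_real (l i) * (\<Sum>m\<in>UNIV. trace (P m ** L k ** P i ** adj (L k))))"
    by (simp add: gain outflow anticommutator)
  also have "\<dots> = (\<Sum>j\<in>UNIV. of_real (l j) * wrate N L P i j)
      - of_real (l i) * (\<Sum>m\<in>UNIV. wrate N L P m i)"
    by (simp add: wrate_def sum_subtractf sum_distrib_left, simp only: sum.swap[of _ "{Suc 0..N}"])
  finally show ?thesis .
qed

(* The diagonal rate wrate N L P i i occurs in both sums and cancels, which is why Omega may
   omit it. *)
lemma Omega_mult_cvec_nth:
  "(Omega N L P *v cvec x) $ i =
    (\<Sum>j\<in>UNIV. of_real (x $ j) * wrate N L P i j) - of_real (x $ i) * (\<Sum>m\<in>UNIV. wrate N L P m i)"
  by (simp add: matrix_vector_mult_def Omega_def cvec_def sum.remove[of UNIV i] algebra_simps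
      if_distrib cong: if_cong)

lemma trace_flag_mult_spectral_derivative:
  assumes flag: "complete_flag P" and tangent: "\<And>i j. trace (P i ** P' j) = 0"
  shows "trace (P i ** (\<Sum>j\<in>UNIV. l j *\<^sub>R P' j + l' j *\<^sub>R P j)) = of_real (l' i)"
  by (simp add: matrix_sum_ldistrib matrix_add_ldistrib matrix_scalar_ac
      scalar_matrix_assoc[symmetric] trace_sum trace_add
      trace_scaleR tangent complete_flag_orthogonal[OF flag] complete_flag_trace[OF flag]
      if_distrib cong: if_cong)

theorem mainTheorem2:
  fixes N :: nat and L :: "nat \<Rightarrow> 'n::finite cmat"
    and H :: "real \<Rightarrow> 'n cmat" and \<rho> :: "real \<Rightarrow> 'n cmat"
    and \<Lambda> :: "real \<Rightarrow> real^'n" and \<pi> :: "real \<Rightarrow> 'n \<Rightarrow> 'n cmat"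
    and I :: "real set"
  assumes I_open: "open I"
    and herm: "\<And>t. t \<in> I \<Longrightarrow> hermitian (H t)"
    and lindblad: "\<And>t. t \<in> I \<Longrightarrow>
        (\<rho> has_vector_derivative
           (cscale (-\<i>) (H t ** \<rho> t - \<rho> t ** H t) + dissipator N L (\<rho> t))) (at t)"
    and decomp: "\<And>t. t \<in> I \<Longrightarrow> \<rho> t = (\<Sum>j\<in>UNIV. (\<Lambda> t $ j) *\<^sub>R \<pi> t j)"
    and Lambda_diff: "\<And>t. t \<in> I \<Longrightarrow> \<Lambda> differentiable (at t)"
    and flag: "\<And>t. t \<in> I \<Longrightarrow> complete_flag (\<pi> t)"
    and flag_diff: "\<And>t j. t \<in> I \<Longrightarrow> (\<lambda>s. \<pi> s j) differentiable (at t)"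
  shows "\<forall>t\<in>I. cvec (vector_derivative \<Lambda> (at t)) = Omega N L (\<pi> t) *v cvec (\<Lambda> t)"
proof
  fix t assume t: "t \<in> I"
  define \<Lambda>' where "\<Lambda>' = vector_derivative \<Lambda> (at t)"
  define \<pi>' where "\<pi>' = (\<lambda>j. vector_derivative (\<lambda>s. \<pi> s j) (at t))"
  have \<Lambda>_deriv: "((\<lambda>s. \<Lambda> s $ j) has_real_derivative \<Lambda>' $ j) (at t)" for j
    using bounded_linear.has_vector_derivative[OF bounded_linear_vec_nth
        vector_derivative_works[THEN iffD1, OF Lambda_diff[OF t]]]
    by (simp add: \<Lambda>'_def has_real_derivative_iff_has_vector_derivative)
  have \<pi>_deriv: "((\<lambda>s. \<pi> s j) has_vector_derivative \<pi>' j) (at t)" for j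
    using flag_diff[OF t] by (simp add: \<pi>'_def vector_derivative_works)
  have orth: "\<pi> s i ** \<pi> s j = (if i = j then \<pi> s i else 0)" if "s \<in> I" for s i j
    using complete_flag_orthogonal[OF flag[OF that]] .
  have tangent: "trace (\<pi> t i ** \<pi>' j) = 0" for i j
    using orthogonal_projections_derivative[OF I_open t orth \<pi>_deriv]
    by (rule trace_proj_mult_eq_0[rotated 2]) (simp_all add: orth[OF t])
  define \<rho>' where "\<rho>' = (\<Sum>j\<in>UNIV. \<Lambda> t $ j *\<^sub>R \<pi>' j + \<Lambda>' $ j *\<^sub>R \<pi> t j)"
  have "((\<lambda>s. \<Sum>j\<in>UNIV. \<Lambda> s $ j *\<^sub>R \<pi> s j) has_vector_derivative \<rho>') (at t)"
    unfolding \<rho>'_def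
    by (intro has_vector_derivative_sum has_vector_derivative_scaleR \<Lambda>_deriv \<pi>_deriv)
  then have "(\<rho> has_vector_derivative \<rho>') (at t)"
    by (rule has_vector_derivative_transform_within_open[OF _ I_open t]) (simp add: decomp)
  then have \<rho>'_eq: "\<rho>' =
      cscale (-\<i>) (H t ** \<rho> t - \<rho> t ** H t) + dissipator N L (\<rho> t)"
    using lindblad[OF t] by (rule vector_derivative_unique_at)
  have "of_real (\<Lambda>' $ i) =
      (\<Sum>j\<in>UNIV. of_real (\<Lambda> t $ j) * wrate N L (\<pi> t) i j)
      - of_real (\<Lambda> t $ i) * (\<Sum>m\<in>UNIV. wrate N L (\<pi> t) m i)" for i
    using arg_cong[OF \<rho>'_eq, of "\<lambda>M. trace (\<pi> t i ** M)"]
    by (simp add: \<rho>'_def trace_flag_mult_spectral_derivative flag[OF t] tangent decomp[OF t]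
        matrix_add_ldistrib trace_add matrix_mult_cscale trace_cscale trace_flag_mult_commutator
        trace_flag_mult_dissipator)
  then show "cvec \<Lambda>' = Omega N L (\<pi> t) *v cvec (\<Lambda> t)"
    unfolding vec_eq_iff Omega_mult_cvec_nth by (simp add: cvec_def)
qed

end
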